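(* Let $G$ be a chordal graph and let $\mathcal{H}'=(V',\mathcal{E}')$ be a Berge-acyclic subhypergraph of $\mathcal{H}(G)$. If $F_1,\dots,F_k$ are the connected components of $G[\mathcal{E}']$, then each $F_i$ is a cactus and every cycle of each $F_i$ is a $3$-cycle.
   Context: All graphs are finite, simple and undirected. A graph is chordal if it has no induced cycle of length greater than $3$. A cactus is a connected graph in which every edge lies in at most one cycle. A hypergraph is a pair $(V,\mathcal{E})$ with $V$ finite and $\mathcal{E}$ a set of nonempty subsets of $V$; a subhypergraph $(V',\mathcal{E}')$ has $V'\subseteq V$, $\mathcal{E}'\subseteq\mathcal{E}$. A Berge-cycle is a sequence $(E_1,x_1,\dots,E_n,x_n)$, $n\ge 2$, of distinct hyperedges $E_i$ and distinct vertices $x_i$ with $x_i\in E_i\cap E_{i+1}$ for all $i$ (indices mod $n$); a hypergraph is Berge-acyclic if it has no Berge-cycle. For a graph $G=(V,E)$, $\mathcal{H}(G)=(V,\mathcal{E})$ is the hypergraph whose hyperedges are exactly the $3$-element vertex sets inducing a triangle in $G$. For $\mathcal{E}'\subseteq\mathcal{E}$, $G[\mathcal{E}']$ is the graph whose vertices are the vertices occurring in hyperedges of $\mathcal{E}'$ and in which $u,v$ are adjacent iff $\{u,v\}\subseteq e$ for some $e\in\mathcal{E}'$. *)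

theory Defs
  imports Main
begin

definition simple_graph :: "'a set \<Rightarrow> 'a set set \<Rightarrow> bool" where
  "simple_graph V E \<longleftrightarrow> finite V \<and> (\<forall>e\<in>E. \<exists>u v. e = {u, v} \<and> u \<noteq> v \<and> u \<in> V \<and> v \<in> V)"

definition is_cycle :: "'a set \<Rightarrow> 'a set set \<Rightarrow> 'a list \<Rightarrow> bool" where
  "is_cycle V E cs \<longleftrightarrow> length cs \<ge> 3 \<and> distinct cs \<and> set cs \<subseteq> V \<and>
     (\<forall>i < length cs. {cs ! i, cs ! ((i + 1) mod length cs)} \<in> E)"

definition cycle_edges :: "'a list \<Rightarrow> 'a set set" where
  "cycle_edges cs = {{cs ! i, cs ! ((i + 1) mod length cs)} | i. i < length cs}"

definition induced_cycle :: "'a set \<Rightarrow> 'a set set \<Rightarrow> 'a list \<Rightarrow> bool" where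
  "induced_cycle V E cs \<longleftrightarrow> is_cycle V E cs \<and>
     (\<forall>i < length cs. \<forall>j < length cs. {cs ! i, cs ! j} \<in> E \<longrightarrow> {cs ! i, cs ! j} \<in> cycle_edges cs)"

definition chordal :: "'a set \<Rightarrow> 'a set set \<Rightarrow> bool" where
  "chordal V E \<longleftrightarrow> \<not> (\<exists>cs. induced_cycle V E cs \<and> length cs > 3)"

definition reach :: "'a set set \<Rightarrow> 'a \<Rightarrow> 'a \<Rightarrow> bool" where
  "reach E = (\<lambda>x y. {x, y} \<in> E)\<^sup>*\<^sup>*"

definition connected_graph :: "'a set \<Rightarrow> 'a set set \<Rightarrow> bool" where
  "connected_graph V E \<longleftrightarrow> V \<noteq> {} \<and> (\<forall>u\<in>V. \<forall>v\<in>V. reach E u v)"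

definition cactus :: "'a set \<Rightarrow> 'a set set \<Rightarrow> bool" where
  "cactus V E \<longleftrightarrow> connected_graph V E \<and>
     (\<forall>e\<in>E. \<forall>c1 c2. is_cycle V E c1 \<and> is_cycle V E c2 \<and> e \<in> cycle_edges c1 \<and> e \<in> cycle_edges c2
        \<longrightarrow> cycle_edges c1 = cycle_edges c2)"

definition components :: "'a set \<Rightarrow> 'a set set \<Rightarrow> 'a set set" where
  "components V E = {{v. reach E u v} | u. u \<in> V}"

definition comp_edges :: "'a set set \<Rightarrow> 'a set \<Rightarrow> 'a set set" where
  "comp_edges E C = {e \<in> E. e \<subseteq> C}"

definition hypergraph :: "'a set \<Rightarrow> 'a set set \<Rightarrow> bool" where
  "hypergraph V \<E> \<longleftrightarrow> finite V \<and> (\<forall>e\<in>\<E>. e \<noteq> {} \<and> e \<subseteq> V)"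

definition subhypergraph :: "'a set \<Rightarrow> 'a set set \<Rightarrow> 'a set \<Rightarrow> 'a set set \<Rightarrow> bool" where
  "subhypergraph V' \<E>' V \<E> \<longleftrightarrow> hypergraph V' \<E>' \<and> V' \<subseteq> V \<and> \<E>' \<subseteq> \<E>"

definition berge_cycle :: "'a set set \<Rightarrow> 'a set list \<Rightarrow> 'a list \<Rightarrow> bool" where
  "berge_cycle \<E> Es xs \<longleftrightarrow> length Es = length xs \<and> length Es \<ge> 2 \<and> distinct Es \<and> distinct xs \<and>
     set Es \<subseteq> \<E> \<and> (\<forall>i < length Es. xs ! i \<in> Es ! i \<inter> Es ! ((i + 1) mod length Es))"

definition berge_acyclic :: "'a set set \<Rightarrow> bool" where
  "berge_acyclic \<E> \<longleftrightarrow> \<not> (\<exists>Es xs. berge_cycle \<E> Es xs)"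

text \<open>Hyperedges of H(G): the 3-element vertex sets inducing a triangle.\<close>

definition triangles :: "'a set \<Rightarrow> 'a set set \<Rightarrow> 'a set set" where
  "triangles V E = {{x, y, z} | x y z. x \<in> V \<and> y \<in> V \<and> z \<in> V \<and> x \<noteq> y \<and> y \<noteq> z \<and> x \<noteq> z \<and>
                      {x, y} \<in> E \<and> {y, z} \<in> E \<and> {x, z} \<in> E}"

text \<open>G[E']: vertices occurring in hyperedges of E', u v adjacent iff both in some hyperedge.\<close>

definition hg_vertices :: "'a set set \<Rightarrow> 'a set" where
  "hg_vertices \<E>' = \<Union> \<E>'"

definition hg_edges :: "'a set set \<Rightarrow> 'a set set" where
  "hg_edges \<E>' = {{u, v} | u v. u \<noteq> v \<and> (\<exists>e\<in>\<E>'. {u, v} \<subseteq> e)}"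

end

theory Submission
  imports Defs
begin

(* In a Berge-acyclic hypergraph, a closed walk through hyperedges whose connecting vertices are
   distinct never leaves its first hyperedge: if its hyperedges are distinct it is a Berge cycle
   (or has length at most one), and otherwise a repeated hyperedge splits it into two shorter such
   walks that share this hyperedge. So every cycle of G[E'] lies inside one hyperedge; as the
   hyperedges are triangles, it is a 3-cycle whose vertex set is a hyperedge, and two such cycles
   sharing an edge give two hyperedges sharing two vertices, i.e. a Berge 2-cycle. *)

definition closed_berge_walk :: "'a set set \<Rightarrow> 'a set list \<Rightarrow> 'a list \<Rightarrow> bool" where
  "closed_berge_walk \<E> Es xs \<longleftrightarrow> length Es = length xs \<and> distinct xs \<and> set Es \<subseteq> \<E> \<and>
     (\<forall>i < length Es. xs ! i \<in> Es ! i \<inter> Es ! ((i + 1) mod length Es))"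

lemma berge_cycle_iff_closed_berge_walk:
  "berge_cycle \<E> Es xs \<longleftrightarrow> closed_berge_walk \<E> Es xs \<and> 2 \<le> length Es \<and> distinct Es"
  unfolding berge_cycle_def closed_berge_walk_def by auto

lemma closed_berge_walk_nth:
  assumes "closed_berge_walk \<E> Es xs" "i < length Es"
  shows "xs ! i \<in> Es ! i \<inter> Es ! ((i + 1) mod length Es)"
  using assms unfolding closed_berge_walk_def by blast

lemma closed_berge_walk_rotate:
  assumes "closed_berge_walk \<E> Es xs"
  shows "closed_berge_walk \<E> (rotate k Es) (rotate k xs)"
proof -
  let ?m = "length Es"
  have "rotate k xs ! i \<in> rotate k Es ! i \<inter> rotate k Es ! ((i + 1) mod ?m)" if "i < ?m" for i
  proof -
    have pos: "0 < ?m"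
      using that by linarith
    then have "(i + 1) mod ?m < ?m"
      by simp
    then have "rotate k Es ! ((i + 1) mod ?m) = Es ! ((k + (i + 1) mod ?m) mod ?m)"
      by (rule nth_rotate)
    also have "\<dots> = Es ! (((k + i) mod ?m + 1) mod ?m)"
      by (simp add: mod_simps add.assoc)
    finally have "rotate k Es ! ((i + 1) mod ?m) = Es ! (((k + i) mod ?m + 1) mod ?m)" .
    moreover have "xs ! ((k + i) mod ?m) \<in> Es ! ((k + i) mod ?m) \<inter> Es ! (((k + i) mod ?m + 1) mod ?m)"
      using pos by (intro closed_berge_walk_nth[OF assms]) simp
    moreover have "length xs = ?m"
      using assms unfolding closed_berge_walk_def by simp
    ultimately show ?thesis
      using that by (simp add: nth_rotate)
  qed
  then show ?thesis
    using assms unfolding closed_berge_walk_def by simp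
qed

(* At a repetition Es ! j = Es ! 0 the vertex xs ! (j - 1) closes the first part (take) and
   xs ! (length Es - 1) closes the second (drop). *)
lemma closed_berge_walk_take:
  assumes "closed_berge_walk \<E> Es xs" "j < length Es" "Es ! j = Es ! 0"
  shows "closed_berge_walk \<E> (take j Es) (take j xs)"
proof -
  let ?m = "length Es"
  have "take j xs ! i \<in> take j Es ! i \<inter> take j Es ! ((i + 1) mod j)" if "i < j" for i
  proof -
    have "xs ! i \<in> Es ! i \<inter> Es ! ((i + 1) mod ?m)"
      using assms(2) that by (intro closed_berge_walk_nth[OF assms(1)]) simp
    moreover have "Es ! ((i + 1) mod j) = Es ! ((i + 1) mod ?m)"
      using that assms(2,3) by (cases "i + 1 = j") auto
    ultimately show ?thesis
      using that by simp
  qed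
  then show ?thesis
    using assms(1,2) unfolding closed_berge_walk_def
    by (auto simp: min_absorb2 dest: in_set_takeD)
qed

lemma closed_berge_walk_drop:
  assumes "closed_berge_walk \<E> Es xs" "j < length Es" "Es ! j = Es ! 0"
  shows "closed_berge_walk \<E> (drop j Es) (drop j xs)"
proof -
  let ?m = "length Es"
  have "drop j xs ! i \<in> drop j Es ! i \<inter> drop j Es ! ((i + 1) mod (?m - j))" if "i < ?m - j" for i
  proof -
    have "xs ! (j + i) \<in> Es ! (j + i) \<inter> Es ! ((j + i + 1) mod ?m)"
      using that by (intro closed_berge_walk_nth[OF assms(1)]) simp
    moreover have "Es ! (j + (i + 1) mod (?m - j)) = Es ! ((j + i + 1) mod ?m)"
    proof (cases "i + 1 = ?m - j")
      case True
      then have "j + i + 1 = ?m"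
        using assms(2) by simp
      then show ?thesis
        using True assms(3) by simp
    qed (use that in simp)
    ultimately show ?thesis
      using that assms(1) unfolding closed_berge_walk_def by simp
  qed
  then show ?thesis
    using assms(1,2) unfolding closed_berge_walk_def
    by (auto dest: in_set_dropD)
qed

lemma berge_acyclic_closed_walk_single_hyperedge:
  assumes "berge_acyclic \<E>" "closed_berge_walk \<E> Es xs"
  shows "\<exists>e. set Es \<subseteq> {e}"
  using assms(2)
proof (induction "length Es" arbitrary: Es xs rule: less_induct)
  case less
  show ?case
  proof (cases "distinct Es")
    case True
    then have "length Es < 2"
      using assms(1) less.prems unfolding berge_acyclic_def berge_cycle_iff_closed_berge_walk
      by (meson not_less)
    then show ?thesis
      by (cases Es) auto
  next
    case False
    then obtain i j where ij: "i < j" "j < length Es" "Es ! i = Es ! j"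
      by (metis distinct_conv_nth linorder_neqE_nat)
    define k where "k = j - i"
    define Rs where "Rs = rotate i Es"
    have k: "0 < k" "k < length Rs"
      using ij unfolding k_def Rs_def by auto
    have walk: "closed_berge_walk \<E> Rs (rotate i xs)"
      unfolding Rs_def using less.prems by (rule closed_berge_walk_rotate)
    have "0 < length Es"
      using ij by linarith
    then have "Rs ! 0 = Es ! i" "Rs ! k = Es ! j"
      using ij unfolding k_def Rs_def by (simp_all add: nth_rotate)
    then have repeat: "Rs ! k = Rs ! 0"
      using ij(3) by simp
    have "length (take k Rs) < length Es" "length (drop k Rs) < length Es"
      using k unfolding Rs_def by auto
    then obtain a b where a: "set (take k Rs) \<subseteq> {a}" and b: "set (drop k Rs) \<subseteq> {b}"
      using less.hyps closed_berge_walk_take[OF walk k(2) repeat]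
        closed_berge_walk_drop[OF walk k(2) repeat] by meson
    have "Rs ! 0 \<in> set (take k Rs)" "Rs ! k \<in> set (drop k Rs)"
      using k by (auto simp: in_set_conv_nth intro: exI[of _ 0])
    then have "b = a"
      using a b repeat by auto
    then have "set Rs \<subseteq> {a}"
      using a b append_take_drop_id[of k Rs] set_append by (metis Un_least)
    then show ?thesis
      unfolding Rs_def by auto
  qed
qed

lemma hg_edges_in_hyperedge:
  assumes "{u, v} \<in> hg_edges \<E>"
  shows "\<exists>e\<in>\<E>. {u, v} \<subseteq> e"
proof -
  obtain a b e where "{u, v} = {a, b}" "e \<in> \<E>" "{a, b} \<subseteq> e"
    using assms unfolding hg_edges_def by blast
  then show ?thesis
    by metis
qed

lemma berge_acyclic_cycle_in_hyperedge:
  assumes "berge_acyclic \<E>" "is_cycle V (hg_edges \<E>) cs"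
  shows "\<exists>e\<in>\<E>. set cs \<subseteq> e"
proof -
  let ?n = "length cs"
  have "\<forall>i<?n. \<exists>e\<in>\<E>. {cs ! i, cs ! ((i + 1) mod ?n)} \<subseteq> e"
    using assms(2) hg_edges_in_hyperedge unfolding is_cycle_def by metis
  then obtain f where f: "\<And>i. i < ?n \<Longrightarrow> f i \<in> \<E> \<and> {cs ! i, cs ! ((i + 1) mod ?n)} \<subseteq> f i"
    by metis
  have n: "3 \<le> ?n" "distinct cs"
    using assms(2) unfolding is_cycle_def by auto
  have "rotate 1 cs ! i \<in> map f [0..<?n] ! i \<inter> map f [0..<?n] ! ((i + 1) mod ?n)"
    if "i < ?n" for i
  proof -
    have "(i + 1) mod ?n < ?n"
      using n(1) by (intro mod_less_divisor) linarith
    then show ?thesis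
      using f[OF that] f[of "(i + 1) mod ?n"] that by (simp add: nth_rotate1)
  qed
  then have "closed_berge_walk \<E> (map f [0..<?n]) (rotate 1 cs)"
    using f n(2) unfolding closed_berge_walk_def by auto
  then obtain e where "set (map f [0..<?n]) \<subseteq> {e}"
    using berge_acyclic_closed_walk_single_hyperedge[OF assms(1)] by blast
  then have e: "f i = e" if "i < ?n" for i
    using that by (auto simp: image_subset_iff)
  have "set cs \<subseteq> e"
    using f e by (auto simp: in_set_conv_nth)
  moreover have "0 < ?n"
    using n(1) by linarith
  ultimately show ?thesis
    using f e by blast
qed

lemma berge_acyclic_pair_in_unique_hyperedge:
  assumes "berge_acyclic \<E>" "e1 \<in> \<E>" "e2 \<in> \<E>" "p \<noteq> q" "{p, q} \<subseteq> e1" "{p, q} \<subseteq> e2"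
  shows "e1 = e2"
proof (rule ccontr)
  assume "e1 \<noteq> e2"
  then have "berge_cycle \<E> [e1, e2] [p, q]"
    using assms(2-6) unfolding berge_cycle_def by (auto simp: less_Suc_eq)
  then show False
    using assms(1) unfolding berge_acyclic_def by blast
qed

lemma cycle_edges_length_3:
  assumes "length c = 3" "distinct c"
  shows "cycle_edges c = {{u, v} | u v. u \<in> set c \<and> v \<in> set c \<and> u \<noteq> v}"
proof -
  obtain a b d where c: "c = [a, b, d]"
    using assms(1) by (metis length_0_conv length_Suc_conv numeral_3_eq_3)
  have "cycle_edges c = (\<lambda>i. {c ! i, c ! ((i + 1) mod length c)}) ` {..<length c}"
    unfolding cycle_edges_def by auto
  also have "{..<length c} = {0, 1, 2}"
    using assms(1) by auto
  also have "(\<lambda>i. {c ! i, c ! ((i + 1) mod length c)}) ` {0, 1, 2} = {{a, b}, {b, d}, {d, a}}"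
    unfolding c by simp
  also have "\<dots> = {{u, v} | u v. u \<in> set c \<and> v \<in> set c \<and> u \<noteq> v}"
    using assms(2) unfolding c by (auto simp: insert_commute)
  finally show ?thesis .
qed

lemma card_triangle:
  assumes "e \<in> triangles V E"
  shows "card e = 3"
  using assms unfolding triangles_def by auto

lemma is_cycle_mono:
  assumes "is_cycle V E cs" "E \<subseteq> E'"
  shows "is_cycle V E' cs"
  using assms unfolding is_cycle_def by blast

lemma berge_acyclic_3_uniform_cycle:
  assumes "berge_acyclic \<E>" "\<And>e. e \<in> \<E> \<Longrightarrow> card e = 3" "is_cycle V (hg_edges \<E>) cs"
  shows "length cs = 3 \<and> set cs \<in> \<E>"
proof -
  obtain e where e: "e \<in> \<E>" "set cs \<subseteq> e"
    using berge_acyclic_cycle_in_hyperedge assms(1,3) by blast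
  have e3: "card e = 3" "finite e"
    using assms(2)[OF e(1)] by (auto intro: card_ge_0_finite)
  have cs: "3 \<le> length cs" "distinct cs"
    using assms(3) unfolding is_cycle_def by auto
  have "length cs \<le> 3"
    using card_mono[OF e3(2) e(2)] e3(1) distinct_card[OF cs(2)] by simp
  then have "length cs = 3" "card (set cs) = card e"
    using cs e3(1) distinct_card[OF cs(2)] by auto
  then show ?thesis
    using card_subset_eq[OF e3(2) e(2)] e(1) by simp
qed

lemma berge_acyclic_3_uniform_cycles_common_edge:
  assumes "berge_acyclic \<E>" "\<And>e. e \<in> \<E> \<Longrightarrow> card e = 3"
    and "is_cycle V (hg_edges \<E>) c1" "is_cycle V (hg_edges \<E>) c2"
    and "ed \<in> cycle_edges c1" "ed \<in> cycle_edges c2"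
  shows "cycle_edges c1 = cycle_edges c2"
proof -
  have c1: "length c1 = 3" "set c1 \<in> \<E>" "distinct c1"
    using berge_acyclic_3_uniform_cycle[OF assms(1,2,3)] assms(3) unfolding is_cycle_def by auto
  have c2: "length c2 = 3" "set c2 \<in> \<E>" "distinct c2"
    using berge_acyclic_3_uniform_cycle[OF assms(1,2,4)] assms(4) unfolding is_cycle_def by auto
  obtain p q where pq: "ed = {p, q}" "p \<noteq> q" "{p, q} \<subseteq> set c1"
    using assms(5) cycle_edges_length_3[OF c1(1,3)] by auto
  moreover have "ed \<subseteq> set c2"
    using assms(6) cycle_edges_length_3[OF c2(1,3)] by auto
  ultimately have "set c1 = set c2"
    using berge_acyclic_pair_in_unique_hyperedge[OF assms(1) c1(2) c2(2)] by simp
  then show ?thesis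
    using cycle_edges_length_3[OF c1(1,3)] cycle_edges_length_3[OF c2(1,3)] by simp
qed

lemma reach_sym:
  assumes "reach E u v"
  shows "reach E v u"
proof -
  have "symp (\<lambda>x y. {x, y} \<in> E)"
    by (rule sympI) (simp add: insert_commute)
  then show ?thesis
    using assms unfolding reach_def by (blast dest: sympD[OF symp_rtranclp])
qed

lemma reach_within_component:
  assumes "reach E u v"
  shows "reach (comp_edges E {w. reach E u w}) u v"
  using assms unfolding reach_def
proof (induction rule: rtranclp_induct)
  case (step y z)
  then have "{y, z} \<in> comp_edges E {w. (\<lambda>x y. {x, y} \<in> E)\<^sup>*\<^sup>* u w}"
    unfolding comp_edges_def by (auto intro: rtranclp.rtrancl_into_rtrancl)
  with step.IH show ?case
    by (rule rtranclp.rtrancl_into_rtrancl)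
qed simp

lemma connected_graph_component:
  "connected_graph {v. reach E u v} (comp_edges E {v. reach E u v})"
proof -
  let ?C = "{v. reach E u v}"
  have "reach (comp_edges E ?C) v w" if "v \<in> ?C" "w \<in> ?C" for v w
  proof -
    have "reach (comp_edges E ?C) v u" "reach (comp_edges E ?C) u w"
      using that by (simp_all add: reach_within_component reach_sym)
    then show ?thesis
      unfolding reach_def by (rule rtranclp_trans)
  qed
  moreover have "u \<in> ?C"
    unfolding reach_def by simp
  ultimately show ?thesis
    unfolding connected_graph_def by blast
qed

theorem mainTheorem8:
  fixes V :: "'a set" and E :: "'a set set" and V' :: "'a set" and \<E>' :: "'a set set"
  assumes "simple_graph V E"
    and "chordal V E"
    and "subhypergraph V' \<E>' V (triangles V E)"
    and "berge_acyclic \<E>'"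
  shows "\<forall>F \<in> components (hg_vertices \<E>') (hg_edges \<E>').
           cactus F (comp_edges (hg_edges \<E>') F) \<and>
           (\<forall>cs. is_cycle F (comp_edges (hg_edges \<E>') F) cs \<longrightarrow> length cs = 3)"
proof
  fix F
  assume "F \<in> components (hg_vertices \<E>') (hg_edges \<E>')"
  then obtain u where F: "F = {v. reach (hg_edges \<E>') u v}"
    unfolding components_def by blast
  have card3: "card e = 3" if "e \<in> \<E>'" for e
    using assms(3) that card_triangle unfolding subhypergraph_def by blast
  have cycle: "is_cycle F (hg_edges \<E>') cs" if "is_cycle F (comp_edges (hg_edges \<E>') F) cs" for cs
    using that by (rule is_cycle_mono) (auto simp: comp_edges_def)
  show "cactus F (comp_edges (hg_edges \<E>') F) \<and>
      (\<forall>cs. is_cycle F (comp_edges (hg_edges \<E>') F) cs \<longrightarrow> length cs = 3)"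
    unfolding cactus_def
    using connected_graph_component[of "hg_edges \<E>'" u, folded F]
      berge_acyclic_3_uniform_cycles_common_edge[OF assms(4) card3 cycle cycle]
      berge_acyclic_3_uniform_cycle[OF assms(4) card3 cycle]
    by blast
qed

end
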